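(* For every integer $n\ge 0$, \[ (-1)^n d_{n,q}=\frac{1}{n!}\sum_{m=0}^{n}2^{2n-m}B_{m,q}S_1(n,m). \]
   Context: Let $p$ be a fixed odd prime, $\mathbb{C}_p$ the completion of the algebraic closure of $\mathbb{Q}_p$, with $|p|_p=1/p$. Let $q\in\mathbb{C}_p$ with $|1-q|_p<p^{-1/(p-1)}$, and $\log$ denotes the $p$-adic logarithm. The $q$-Bernoulli numbers $B_{n,q}$ are defined by \[ \frac{(q-1)+\frac{q-1}{\log q}t}{qe^t-1}=\sum_{n=0}^\infty B_{n,q}\frac{t^n}{n!}. \] The numbers $d_{n,q}$ ($q$-analogues of the Catalan–Daehee numbers) are defined by \[ \frac{q-1+\frac{q-1}{\log q}\cdot\frac12\log(1-4t)}{q\sqrt{1-4t}-1}=\sum_{n=0}^{\infty}d_{n,q}t^n, \] for $t\in\mathbb{C}_p$ with $|t|_p<p^{-1/(p-1)}$. $S_1(n,m)$ are the Stirling numbers of the first kind, defined by $(x)_n=\sum_{l=0}^n S_1(n,l)x^l$, where $(x)_0=1$ and $(x)_n=x(x-1)\cdots(x-n+1)$ for $n\ge1$. *)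

theory Defs
  imports "HOL-Computational_Algebra.Computational_Algebra"
begin

text \<open>Generating function of the q-Bernoulli numbers, as a formal power series in t.
  The parameter lq plays the role of log q.\<close>
definition qBern_gf :: "'a::field_char_0 \<Rightarrow> 'a \<Rightarrow> 'a fps" where
  "qBern_gf q lq =
     (fps_const (q - 1) + fps_const ((q - 1) / lq) * fps_X) / (fps_const q * fps_exp 1 - 1)"

definition qBern :: "'a::field_char_0 \<Rightarrow> 'a \<Rightarrow> nat \<Rightarrow> 'a" where
  "qBern q lq n = fact n * fps_nth (qBern_gf q lq) n"

definition sqrt_1m4t :: "'a::field_char_0 fps" where
  "sqrt_1m4t = Abs_fps (\<lambda>n. ((1/2) gchoose n) * (-4) ^ n)"

definition log_1m4t :: "'a::field_char_0 fps" where
  "log_1m4t = Abs_fps (\<lambda>n. if n = 0 then 0 else - (4 ^ n / of_nat n))"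

definition qCD_gf :: "'a::field_char_0 \<Rightarrow> 'a \<Rightarrow> 'a fps" where
  "qCD_gf q lq =
     (fps_const (q - 1) + fps_const ((q - 1) / lq) * fps_const (1/2) * log_1m4t)
       / (fps_const q * sqrt_1m4t - 1)"

definition qCD :: "'a::field_char_0 \<Rightarrow> 'a \<Rightarrow> nat \<Rightarrow> 'a" where
  "qCD q lq n = fps_nth (qCD_gf q lq) n"

definition stirling1 :: "nat \<Rightarrow> nat \<Rightarrow> int" where
  "stirling1 n l = coeff (\<Prod>i<n. [:- int i, 1:]) l"

end

theory Submission
  imports Defs
begin

(*
  Because exp (1/2 log (1 - 4t)) = sqrt (1 - 4t), the generating function of d_{n,q} is the
  generating function of B_{n,q} composed with T = 1/2 log (1 - 4t), so
  d_{n,q} = sum_m B_{m,q} / m! [t^n] T^m. The coefficients of the powers of log (1 + x) are the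
  Stirling numbers of the first kind, n! [x^n] log (1 + x)^m = m! S_1(n,m): comparing coefficients
  in (1 + x) (log (1 + x)^(m+1))' = (m + 1) log (1 + x)^m gives their recurrence. Substituting
  x = -4t yields the factor (-4)^n, which with (-1)^n and 2^(-m) from T becomes 2^(2n-m).
*)

lemma stirling1_0: "stirling1 0 m = (if m = 0 then 1 else 0)"
  by (simp add: stirling1_def one_pCons coeff_pCons split: nat.split)

lemma stirling1_Suc_0: "stirling1 (Suc n) 0 = 0"
  by (simp add: stirling1_def flip: poly_0_coeff_0) (auto simp: poly_prod)

lemma stirling1_Suc_Suc: "stirling1 (Suc n) (Suc m) = stirling1 n m - int n * stirling1 n (Suc m)"
proof -
  have "(\<Prod>i<Suc n. [:- int i, 1:]) =
      smult (- int n) (\<Prod>i<n. [:- int i, 1:]) + pCons 0 (\<Prod>i<n. [:- int i, 1:])"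
    by (simp add: mult_pCons_right)
  then show ?thesis by (simp add: stirling1_def)
qed

lemma fps_ln_power_deriv:
  "(1 + fps_X) * fps_deriv (fps_ln 1 ^ Suc k) =
     fps_const (of_nat (Suc k)) * fps_ln (1::'a::field_char_0) ^ k"
proof -
  have "(1 + fps_X) * fps_deriv (fps_ln 1 ^ Suc k) =
      fps_const (of_nat (Suc k)) * fps_ln (1::'a) ^ k * ((1 + fps_X) * inverse (1 + fps_X))"
    by (simp only: fps_deriv_power fps_ln_deriv) (simp add: ac_simps)
  also have "(1 + fps_X) * inverse (1 + fps_X :: 'a fps) = 1"
    by (simp add: inverse_mult_eq_1')
  finally show ?thesis by simp
qed

lemma fps_ln_power_nth_Suc:
  "of_nat (Suc n) * (fps_ln 1 ^ Suc k) $ Suc n =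
     of_nat (Suc k) * (fps_ln 1 ^ k) $ n - of_nat n * (fps_ln (1::'a::field_char_0) ^ Suc k) $ n"
proof -
  have "((1 + fps_X) * fps_deriv G) $ n = of_nat (Suc n) * G $ Suc n + of_nat n * G $ n"
    for G :: "'a fps"
    by (cases n) (simp_all add: algebra_simps del: of_nat_Suc)
  from this[of "fps_ln 1 ^ Suc k"] show ?thesis
    by (simp only: fps_ln_power_deriv fps_mult_left_const_nth) (simp add: algebra_simps del: power_Suc)
qed

lemma fps_ln_power_nth:
  "fact n * (fps_ln 1 ^ m) $ n = fact m * (of_int (stirling1 n m) :: 'a::field_char_0)"
proof (induction n arbitrary: m)
  case 0
  then show ?case by (simp add: stirling1_0 fps_nth_power_0)
next
  case (Suc n)
  show ?case
  proof (cases m)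
    case 0
    then show ?thesis by (simp add: stirling1_Suc_0)
  next
    case (Suc k)
    have "fact (Suc n) * (fps_ln 1 ^ Suc k) $ Suc n
        = fact n * (of_nat (Suc n) * (fps_ln (1::'a) ^ Suc k) $ Suc n)"
      by (simp only: fact_Suc ac_simps)
    also have "\<dots> = of_nat (Suc k) * (fact n * (fps_ln 1 ^ k) $ n)
        - of_nat n * (fact n * (fps_ln 1 ^ Suc k) $ n)"
      by (simp only: fps_ln_power_nth_Suc) (simp add: algebra_simps del: power_Suc)
    also have "\<dots> = fact (Suc k) * of_int (stirling1 (Suc n) (Suc k))"
      by (simp only: Suc.IH) (simp add: stirling1_Suc_Suc algebra_simps)
    finally show ?thesis using Suc by simp
  qed
qed

lemma fps_binomial_eq_exp_ln:
  "fps_binomial c = fps_exp 1 oo (fps_const c * fps_ln (1 :: 'a::field_char_0))"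
proof -
  define E :: "'a fps" where "E = fps_exp 1 oo (fps_const c * fps_ln 1)"
  have "fps_deriv E = E * (fps_const c * inverse (1 + fps_X))"
    by (simp add: E_def fps_compose_deriv fps_ln_deriv)
  also have "\<dots> = fps_const c * E / (1 + fps_X)"
    by (simp add: fps_divide_unit)
  finally have "E = fps_const (E $ 0) * fps_binomial c"
    using fps_binomial_ODE_unique by blast
  then show ?thesis by (simp add: E_def)
qed

lemma log_1m4t_eq_ln_compose: "log_1m4t = fps_ln 1 oo (fps_const (-4) * fps_X)"
proof (rule fps_ext)
  fix n
  show "log_1m4t $ n = (fps_ln 1 oo (fps_const (-4) * fps_X)) $ n"
    by (cases n) (simp_all add: log_1m4t_def fps_ln_nth power_minus')
qed

lemma sqrt_1m4t_eq_binomial_compose: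
  "sqrt_1m4t = fps_binomial (1/2) oo (fps_const (-4) * fps_X)"
  by (rule fps_ext) (simp add: sqrt_1m4t_def)

lemma sqrt_1m4t_eq_exp_compose:
  "sqrt_1m4t = fps_exp 1 oo (fps_const (1/2) * (log_1m4t :: 'a::field_char_0 fps))"
  by (simp add: sqrt_1m4t_eq_binomial_compose log_1m4t_eq_ln_compose fps_binomial_eq_exp_ln
      fps_compose_assoc fps_const_mult_apply_left)

lemma log_1m4t_power_nth:
  "fact n * (log_1m4t ^ m) $ n = (-4) ^ n * fact m * (of_int (stirling1 n m) :: 'a::field_char_0)"
proof -
  have "log_1m4t ^ m = fps_ln 1 ^ m oo (fps_const (-4) * fps_X :: 'a fps)"
    by (simp add: log_1m4t_eq_ln_compose fps_compose_power)
  then have "((log_1m4t :: 'a fps) ^ m) $ n = (-4) ^ n * (fps_ln 1 ^ m) $ n"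
    by simp
  then show ?thesis
    using fps_ln_power_nth[of n m, where 'a = 'a] by (simp add: mult.left_commute)
qed

lemma qBern_gf_compose:
  fixes q lq :: "'a::field_char_0"
  assumes "q \<noteq> 1" and "T $ 0 = 0"
  shows "qBern_gf q lq oo T =
    (fps_const (q - 1) + fps_const ((q - 1) / lq) * T) / (fps_const q * (fps_exp 1 oo T) - 1)"
proof -
  let ?d = "fps_const q * fps_exp 1 - 1 :: 'a fps"
  have "?d $ 0 \<noteq> 0" using assms(1) by simp
  then have "?d dvd N" and "?d oo T \<noteq> 0" for N
    by (auto intro: unit_imp_dvd dest: arg_cong[where f = "\<lambda>f. f $ 0"])
  with assms(2) have "qBern_gf q lq oo T =
      (fps_const (q - 1) + fps_const ((q - 1) / lq) * fps_X oo T) / (?d oo T)"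
    unfolding qBern_gf_def by (intro fps_compose_divide_distrib)
  then show ?thesis
    using assms(2)
    by (simp add: fps_compose_add_distrib fps_compose_sub_distrib fps_compose_mult_distrib)
qed

lemma qCD_gf_eq_qBern_gf_compose:
  fixes q lq :: "'a::field_char_0"
  assumes "q \<noteq> 1"
  shows "qCD_gf q lq = qBern_gf q lq oo (fps_const (1/2) * log_1m4t)"
proof -
  have "(fps_const (1/2) * log_1m4t :: 'a fps) $ 0 = 0"
    by (simp add: log_1m4t_def)
  then show ?thesis
    by (simp add: qBern_gf_compose[OF assms] qCD_gf_def sqrt_1m4t_eq_exp_compose ac_simps)
qed

lemma qCD_eq_sum:
  fixes q lq :: "'a::field_char_0"
  assumes "q \<noteq> 1"
  shows "qCD q lq n =
    (\<Sum>m = 0..n. (-4) ^ n / (2 ^ m * fact n) * qBern q lq m * of_int (stirling1 n m))"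
  unfolding qCD_def qCD_gf_eq_qBern_gf_compose[OF assms] fps_compose_nth
proof (rule sum.cong[OF refl])
  fix m
  have "fact n * (fps_const (1/2) * log_1m4t) ^ m $ n = (1/2) ^ m * (fact n * (log_1m4t ^ m) $ n)"
    by (simp add: power_mult_distrib fps_const_power ac_simps)
  also have "\<dots> = (1/2) ^ m * ((-4) ^ n * fact m * (of_int (stirling1 n m) :: 'a))"
    by (simp only: log_1m4t_power_nth)
  finally show "qBern_gf q lq $ m * (fps_const (1/2) * log_1m4t) ^ m $ n =
      (-4) ^ n / (2 ^ m * fact n) * qBern q lq m * of_int (stirling1 n m)"
    by (simp add: qBern_def field_simps)
qed

theorem theorem2:
  fixes q lq :: "'a::field_char_0" and n :: nat
  assumes "q \<noteq> 1" and "lq \<noteq> 0"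
  shows "(-1) ^ n * qCD q lq n =
    1 / fact n * (\<Sum>m = 0..n. 2 ^ (2 * n - m) * qBern q lq m * of_int (stirling1 n m))"
proof -
  have power_factor_eq: "(-1) ^ n * ((-4) ^ n / (2 ^ m * fact n)) = 1 / fact n * (2 ^ (2 * n - m) :: 'a)"
    if "m \<le> n" for m
  proof -
    have "(-1) ^ n * (-4) ^ n = (2 ^ (2 * n - m) * 2 ^ m :: 'a)"
      using that by (simp flip: power_mult_distrib power_add add: power_mult)
    then show ?thesis by (simp add: field_simps)
  qed
  have "(-1) ^ n * qCD q lq n =
      (\<Sum>m = 0..n. (-1) ^ n * ((-4) ^ n / (2 ^ m * fact n)) * qBern q lq m * of_int (stirling1 n m))"
    by (simp add: qCD_eq_sum[OF assms(1)] sum_distrib_left mult.assoc)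
  also have "\<dots> = (\<Sum>m = 0..n. 1 / fact n * 2 ^ (2 * n - m) * qBern q lq m * of_int (stirling1 n m))"
    by (rule sum.cong[OF refl]) (subst power_factor_eq; simp)
  finally show ?thesis
    by (simp add: sum_distrib_left mult.assoc)
qed

end
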